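(* Let $\mathfrak s=\mathfrak{osp}(1|2)$ with even generators $\mathtt e,\mathtt f,\mathtt h$ and odd generators $\mathtt p,\mathtt q$, subject to $[\mathtt h,\mathtt e]=2\mathtt e$, $[\mathtt h,\mathtt f]=-2\mathtt f$, $[\mathtt e,\mathtt f]=\mathtt h$, $[\mathtt h,\mathtt p]=\mathtt p$, $[\mathtt h,\mathtt q]=-\mathtt q$, $\mathtt p^2=\mathtt e$, $\mathtt q^2=-\mathtt f$, $\mathtt p\mathtt q+\mathtt q\mathtt p=\mathtt h$, and let $\Sigma:=\mathtt p\mathtt q-\mathtt q\mathtt p+\frac12\in U(\mathfrak s)$. Let $\Bbbk=\mathbb{C}(\mathtt h)$, let $\sigma_1$ be the automorphism of $\Bbbk$ which is the identity on $\mathbb C$ and sends $\mathtt h\mapsto \mathtt h-1$, and let $R_1:=\Bbbk[x,x^{-1},\sigma_1]$ be the skew Laurent polynomial algebra (basis $x^i$, $i\in\mathbb Z$, with $x^ix^j=x^{i+j}$ and $xr=\sigma_1(r)x$ for $r\in\Bbbk$). For $u\in\Bbbk^\times$, let $N_u$ be the $R_1$-module structure on $\Bbbk$ given by $x\cdot b=\sigma_1(b)u$. For $\lambda\in\mathbb C$, let $M_{u,\lambda}:=N_u\oplus N_u$ (even $\oplus$ odd) with \[ \mathtt h\mapsto \mathtt h\,I_2,\qquad \mathtt p\mapsto \begin{pmatrix}0&x\\ x&0\end{pmatrix},\qquad \mathtt q\mapsto \begin{pmatrix}0&\frac{\mathtt h-\lambda}{2}\,x^{-1}\\[2pt] \frac{\mathtt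 h+\lambda+1}{2}\,x^{-1}&0\end{pmatrix}. \] Then: (a) This assignment defines on $M_{u,\lambda}$ the structure of a $\mathbb{Z}_2$-graded $U(\mathfrak s)$-module. (b) The element $\Sigma$ acts on $M_{u,\lambda}$ as $(\lambda+\frac12)\mathrm{diag}(1,-1)$; in particular, $\Sigma^2$ acts as $(\lambda+\tfrac12)^2\cdot\mathrm{Id}_{M_{u,\lambda}}$. (c) For the $\mathfrak{sl}_2$-Casimir $\mathtt c:=(\mathtt h+1)^2+4\mathtt f\mathtt e=(\mathtt h-1)^2+4\mathtt e\mathtt f$ (with $\mathtt e=\mathtt p^2$ and $\mathtt f=-\mathtt q^2$) one has \[ \mathtt c|_{(M_{u,\lambda})_{\bar0}}=(\lambda+1)^2,\qquad \mathtt c|_{(M_{u,\lambda})_{\bar1}}=\lambda^2 . \]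
   Context: Work over $\mathbb C$. The Lie superalgebra $\mathfrak s=\mathfrak{osp}(1|2)$, the SCasimir element $\Sigma$, the field $\Bbbk=\mathbb C(\mathtt h)$ (considered purely even), the automorphism $\sigma_1(\mathtt h)=\mathtt h-1$, the skew Laurent polynomial algebra $R_1$, and the modules $N_u$, $M_{u,\lambda}$ are as defined in the claim. *)

theory Defs
  imports "HOL-Computational_Algebra.Computational_Algebra"
          "HOL-Computational_Algebra.Normalized_Fraction"
          "HOL-Computational_Algebra.Field_as_Ring"
          "HOL-Library.Product_Plus"
begin

type_synonym kfield = "complex poly fract"

definition const_k :: "complex \<Rightarrow> kfield" where
  "const_k c = Fract [:c:] 1"

definition hvar :: kfield where
  "hvar = Fract [:0, 1:] 1"

definition shift_k :: "complex \<Rightarrow> kfield \<Rightarrow> kfield" where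
  "shift_k c r = Fract (pcompose (fst (quot_of_fract r)) [:c, 1:])
                       (pcompose (snd (quot_of_fract r)) [:c, 1:])"

definition sigma1 :: "kfield \<Rightarrow> kfield" where
  "sigma1 = shift_k (-1)"

definition sigma1_inv :: "kfield \<Rightarrow> kfield" where
  "sigma1_inv = shift_k 1"

text \<open>Action of x and x^{-1} on the R_1-module N_u = k, x.b = sigma_1(b) u.
  x^{-1} acts by the inverse map b \<mapsto> sigma_1^{-1}(b / u).\<close>
definition xact :: "kfield \<Rightarrow> kfield \<Rightarrow> kfield" where
  "xact u b = sigma1 b * u"

definition xinvact :: "kfield \<Rightarrow> kfield \<Rightarrow> kfield" where
  "xinvact u b = sigma1_inv (b / u)"

text \<open>M_{u,lambda} = N_u (even) \<oplus> N_u (odd), elements are pairs (even, odd).\<close>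
type_synonym Mvec = "kfield \<times> kfield"

definition scal :: "kfield \<Rightarrow> Mvec \<Rightarrow> Mvec" where
  "scal r v = (r * fst v, r * snd v)"

definition Hop :: "Mvec \<Rightarrow> Mvec" where
  "Hop v = (hvar * fst v, hvar * snd v)"

definition Pop :: "kfield \<Rightarrow> Mvec \<Rightarrow> Mvec" where
  "Pop u v = (xact u (snd v), xact u (fst v))"

definition Qop :: "kfield \<Rightarrow> complex \<Rightarrow> Mvec \<Rightarrow> Mvec" where
  "Qop u lam v = ((hvar - const_k lam) / 2 * xinvact u (snd v),
                  (hvar + const_k lam + 1) / 2 * xinvact u (fst v))"

definition Eop :: "kfield \<Rightarrow> Mvec \<Rightarrow> Mvec" where
  "Eop u v = Pop u (Pop u v)"

definition Fop :: "kfield \<Rightarrow> complex \<Rightarrow> Mvec \<Rightarrow> Mvec" where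
  "Fop u lam v = - Qop u lam (Qop u lam v)"

definition SigmaOp :: "kfield \<Rightarrow> complex \<Rightarrow> Mvec \<Rightarrow> Mvec" where
  "SigmaOp u lam v = Pop u (Qop u lam v) - Qop u lam (Pop u v) + scal (1/2) v"

definition Cas1 :: "kfield \<Rightarrow> complex \<Rightarrow> Mvec \<Rightarrow> Mvec" where
  "Cas1 u lam v = Hop (Hop v) + scal 2 (Hop v) + v + scal 4 (Fop u lam (Eop u v))"

definition Cas2 :: "kfield \<Rightarrow> complex \<Rightarrow> Mvec \<Rightarrow> Mvec" where
  "Cas2 u lam v = Hop (Hop v) - scal 2 (Hop v) + v + scal 4 (Eop u (Fop u lam v))"

end

theory Submission
  imports Defs
begin

text \<open>
  Write diag(r, s) for the operator (a, b) \<mapsto> (r a, s b) on M, with r, s \<in> C(h).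
  Because x is sigma_1-semilinear and p, q exchange the two components, p and q move a diagonal
  operator past themselves at the price of a twisted transposition:
  p diag(r, s) = diag(sigma_1 s, sigma_1 r) p and
  q diag(r, s) = diag(sigma_1^(-1) s, sigma_1^(-1) r) q.
  Moreover x x^(-1) = x^(-1) x = 1 makes pq = diag((h+\<lambda>)/2, (h-\<lambda>-1)/2) and
  qp = diag((h-\<lambda>)/2, (h+\<lambda>+1)/2) diagonal, and hence so are ef and fe.
  Every defining relation, the value of \<Sigma> = pq - qp + 1/2, and both forms of the Casimir thus
  become identities between rational functions of h; for instance
  4fe = -diag((h+\<lambda>+2)(h-\<lambda>), (h-\<lambda>+1)(h+\<lambda>+1))
      = -diag((h+1)^2 - (\<lambda>+1)^2, (h+1)^2 - \<lambda>^2).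
\<close>

section \<open>The field C(h) and its shift automorphisms\<close>

lemma pcompose_linear_eq_0_iff:
  "pcompose p [:c, 1:] = 0 \<longleftrightarrow> p = (0 :: 'a :: idom poly)"
  by (simp add: pcompose_eq_0_iff)

lemma shift_k_Fract:
  assumes "b \<noteq> 0"
  shows "shift_k c (Fract a b) = Fract (pcompose a [:c, 1:]) (pcompose b [:c, 1:])"
proof -
  obtain a' b' where q: "quot_of_fract (Fract a b) = (a', b')" by fastforce
  have b': "b' \<noteq> 0" using snd_quot_of_fract_nonzero[of "Fract a b"] q by simp
  have "Fract a' b' = Fract a b" using Fract_quot_of_fract[of "Fract a b"] q by simp
  hence "a' * b = a * b'" using eq_fract(1)[OF b' assms] by simp
  hence "pcompose a' [:c, 1:] * pcompose b [:c, 1:] = pcompose a [:c, 1:] * pcompose b' [:c, 1:]"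
    by (simp flip: pcompose_mult)
  thus ?thesis unfolding shift_k_def q
    by (simp add: eq_fract(1) pcompose_linear_eq_0_iff b' assms)
qed

lemma shift_k_add [simp]: "shift_k c (r + s) = shift_k c r + shift_k c s"
  by (cases r, cases s) (simp add: shift_k_Fract pcompose_linear_eq_0_iff pcompose_add pcompose_mult)

lemma shift_k_mult [simp]: "shift_k c (r * s) = shift_k c r * shift_k c s"
  by (cases r, cases s) (simp add: shift_k_Fract pcompose_linear_eq_0_iff pcompose_mult)

lemma shift_k_uminus [simp]: "shift_k c (- r) = - shift_k c r"
  by (cases r) (simp add: shift_k_Fract pcompose_linear_eq_0_iff pcompose_uminus)

lemma shift_k_diff [simp]: "shift_k c (r - s) = shift_k c r - shift_k c s"
  by (simp only: diff_conv_add_uminus shift_k_add shift_k_uminus)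

lemma shift_k_0 [simp]: "shift_k c 0 = 0"
  by (simp add: Zero_fract_def shift_k_Fract eq_fract)

lemma shift_k_1 [simp]: "shift_k c 1 = 1"
  by (simp add: One_fract_def shift_k_Fract pcompose_1 flip: one_pCons)

lemma shift_k_shift_k: "shift_k c (shift_k d r) = shift_k (c + d) r"
  by (cases r) (simp add: shift_k_Fract pcompose_linear_eq_0_iff pcompose_pCons add.commute
      flip: pcompose_assoc)

lemma shift_k_by_0: "shift_k 0 r = r"
  by (cases r) (simp add: shift_k_Fract)

lemma shift_k_inverse [simp]: "shift_k c (inverse r) = inverse (shift_k c r)"
proof (cases "r = 0")
  case False
  then have "shift_k c r * shift_k c (inverse r) = 1"
    by (simp flip: shift_k_mult)
  thus ?thesis by (metis inverse_unique)
qed simp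

lemma shift_k_divide [simp]: "shift_k c (r / s) = shift_k c r / shift_k c s"
  by (simp add: divide_inverse)

lemma shift_k_numeral [simp]: "shift_k c (numeral n) = numeral n"
proof -
  have "shift_k c (of_nat m) = of_nat m" for m
    by (induct m) simp_all
  from this[of "numeral n"] show ?thesis by simp
qed

lemma shift_k_const_k [simp]: "shift_k c (const_k d) = const_k d"
  by (simp add: const_k_def shift_k_Fract pcompose_1)

lemma shift_k_hvar [simp]: "shift_k c hvar = hvar + const_k c"
  by (simp add: hvar_def const_k_def shift_k_Fract pcompose_pCons pcompose_1)

lemma const_k_add [simp]: "const_k (a + b) = const_k a + const_k b"
  by (simp add: const_k_def)

lemma const_k_mult [simp]: "const_k (a * b) = const_k a * const_k b"
  by (simp add: const_k_def mult.commute)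

lemma const_k_uminus [simp]: "const_k (- a) = - const_k a"
  by (simp add: const_k_def)

lemma const_k_0 [simp]: "const_k 0 = 0"
  by (simp add: const_k_def Zero_fract_def)

lemma const_k_1 [simp]: "const_k 1 = 1"
  by (simp add: const_k_def One_fract_def one_pCons)

lemma const_k_eq_0_iff: "const_k c = 0 \<longleftrightarrow> c = 0"
  by (simp add: const_k_def Zero_fract_def eq_fract(1))

lemma const_k_numeral [simp]: "const_k (numeral n) = numeral n"
proof -
  have "const_k (of_nat m) = of_nat m" for m
    by (induct m) simp_all
  from this[of "numeral n"] show ?thesis by simp
qed

(* fract has no char_0 instance; field_simps needs this for the divisions by 2 and 4. *)
lemma numeral_kfield_neq_0 [simp]: "(numeral n :: kfield) \<noteq> 0"
  by (metis const_k_eq_0_iff const_k_numeral zero_neq_numeral)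

lemma const_k_inverse [simp]: "const_k (inverse a) = inverse (const_k a)"
proof (cases "a = 0")
  case False
  then have "const_k a * const_k (inverse a) = 1"
    by (simp flip: const_k_mult)
  thus ?thesis by (metis inverse_unique)
qed simp

lemma const_k_divide [simp]: "const_k (a / b) = const_k a / const_k b"
  by (simp add: divide_inverse)

lemma const_k_power [simp]: "const_k (a ^ n) = const_k a ^ n"
  by (induct n) simp_all

section \<open>The module N_u\<close>

lemma sigma1_const_k [simp]: "sigma1 (const_k c) = const_k c"
  by (simp add: sigma1_def)

lemma sigma1_inv_const_k [simp]: "sigma1_inv (const_k c) = const_k c"
  by (simp add: sigma1_inv_def)

lemma xact_0 [simp]: "xact u 0 = 0"
  by (simp add: xact_def sigma1_def)

lemma xinvact_0 [simp]: "xinvact u 0 = 0"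
  by (simp add: xinvact_def sigma1_inv_def)

lemma xact_add: "xact u (a + b) = xact u a + xact u b"
  by (simp add: xact_def sigma1_def algebra_simps)

lemma xinvact_add: "xinvact u (a + b) = xinvact u a + xinvact u b"
  by (simp add: xinvact_def sigma1_inv_def add_divide_distrib)

lemma xact_uminus: "xact u (- a) = - xact u a"
  by (simp add: xact_def sigma1_def)

lemma xact_mult: "xact u (r * b) = sigma1 r * xact u b"
  by (simp add: xact_def sigma1_def)

lemma xinvact_mult: "xinvact u (r * b) = sigma1_inv r * xinvact u b"
  by (simp add: xinvact_def sigma1_inv_def flip: shift_k_mult)

lemma xact_xinvact: "u \<noteq> 0 \<Longrightarrow> xact u (xinvact u b) = b"
  by (simp add: xact_def xinvact_def sigma1_def sigma1_inv_def shift_k_shift_k shift_k_by_0)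

lemma xinvact_xact: "u \<noteq> 0 \<Longrightarrow> xinvact u (xact u b) = b"
  by (simp add: xact_def xinvact_def sigma1_def sigma1_inv_def shift_k_shift_k shift_k_by_0)

section \<open>Diagonal operators on M_{u,\<lambda>}\<close>

definition diag :: "kfield \<Rightarrow> kfield \<Rightarrow> Mvec \<Rightarrow> Mvec" where
  "diag r s v = (r * fst v, s * snd v)"

lemma Hop_eq_diag: "Hop v = diag hvar hvar v"
  by (simp add: Hop_def diag_def)

lemma scal_eq_diag: "scal r v = diag r r v"
  by (simp add: scal_def diag_def)

lemma diag_1: "diag 1 1 v = v"
  by (simp add: diag_def)

lemma diag_diag: "diag r s (diag r' s' v) = diag (r * r') (s * s') v"
  by (simp add: diag_def mult.assoc)

lemma diag_add: "diag r s (v + w) = diag r s v + diag r s w"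
  by (simp add: diag_def distrib_left)

lemma diag_uminus: "diag r s (- v) = diag (- r) (- s) v"
  by (simp add: diag_def)

lemma uminus_diag: "- diag r s v = diag (- r) (- s) v"
  by (simp add: diag_def)

lemma diag_add_diag: "diag r s v + diag r' s' v = diag (r + r') (s + s') v"
  by (simp add: diag_def distrib_right)

lemma diag_diff_diag: "diag r s v - diag r' s' v = diag (r - r') (s - s') v"
  by (simp add: diag_def left_diff_distrib)

lemma Pop_add: "Pop u (v + w) = Pop u v + Pop u w"
  by (simp add: Pop_def xact_add)

lemma Qop_add: "Qop u lam (v + w) = Qop u lam v + Qop u lam w"
  by (simp add: Qop_def xinvact_add distrib_left)

lemma Pop_uminus: "Pop u (- v) = - Pop u v"
  by (simp add: Pop_def xact_uminus)

lemma Pop_diag: "Pop u (diag r s v) = diag (sigma1 s) (sigma1 r) (Pop u v)"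
  by (simp add: Pop_def diag_def xact_mult)

lemma Qop_diag: "Qop u lam (diag r s v) = diag (sigma1_inv s) (sigma1_inv r) (Qop u lam v)"
  by (simp add: Qop_def diag_def xinvact_mult mult.left_commute)

lemma Pop_Qop:
  assumes "u \<noteq> 0"
  shows "Pop u (Qop u lam v) = diag ((hvar + const_k lam) / 2) ((hvar - const_k lam - 1) / 2) v"
proof -
  have "sigma1 ((hvar + const_k lam + 1) / 2) = (hvar + const_k lam) / 2"
    and "sigma1 ((hvar - const_k lam) / 2) = (hvar - const_k lam - 1) / 2"
    by (simp_all add: sigma1_def)
  then show ?thesis
    unfolding Pop_def Qop_def diag_def
    by (simp only: fst_conv snd_conv xact_mult xact_xinvact[OF assms])
qed

lemma Qop_Pop:
  assumes "u \<noteq> 0"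
  shows "Qop u lam (Pop u v) = diag ((hvar - const_k lam) / 2) ((hvar + const_k lam + 1) / 2) v"
  unfolding Pop_def Qop_def diag_def by (simp only: fst_conv snd_conv xinvact_xact[OF assms])

section \<open>The relations of U(osp(1|2)) on M_{u,\<lambda>}\<close>

lemma Hop_add: "Hop (v + w) = Hop v + Hop w"
  by (simp add: Hop_eq_diag diag_add)

lemma Hop_scal_const_k: "Hop (scal (const_k c) v) = scal (const_k c) (Hop v)"
  by (simp add: Hop_eq_diag scal_eq_diag diag_diag mult.commute)

lemma Pop_scal_const_k: "Pop u (scal (const_k c) v) = scal (const_k c) (Pop u v)"
  by (simp add: scal_eq_diag Pop_diag)

lemma Qop_scal_const_k: "Qop u lam (scal (const_k c) v) = scal (const_k c) (Qop u lam v)"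
  by (simp add: scal_eq_diag Qop_diag)

lemma Pop_Pop: "Pop u (Pop u v) = Eop u v"
  by (simp add: Eop_def)

lemma Qop_Qop: "Qop u lam (Qop u lam v) = - Fop u lam v"
  by (simp add: Fop_def)

lemma Hop_Pop_commutator: "Hop (Pop u v) - Pop u (Hop v) = Pop u v"
  by (simp add: Hop_eq_diag Pop_diag diag_diff_diag diag_1 sigma1_def)

lemma Hop_Qop_commutator: "Hop (Qop u lam v) - Qop u lam (Hop v) = - Qop u lam v"
  by (simp add: Hop_eq_diag Qop_diag diag_diff_diag sigma1_inv_def)
     (simp add: diag_def prod_eq_iff)

lemma Hop_Eop_commutator: "Hop (Eop u v) - Eop u (Hop v) = scal 2 (Eop u v)"
  by (simp add: Eop_def Hop_eq_diag scal_eq_diag Pop_diag diag_diff_diag sigma1_def)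

lemma Hop_Fop_commutator: "Hop (Fop u lam v) - Fop u lam (Hop v) = scal (- 2) (Fop u lam v)"
  by (simp add: Fop_def Hop_eq_diag scal_eq_diag Qop_diag diag_uminus uminus_diag diag_diff_diag
      sigma1_inv_def)

lemma Pop_Qop_anticommutator:
  "u \<noteq> 0 \<Longrightarrow> Pop u (Qop u lam v) + Qop u lam (Pop u v) = Hop v"
  by (simp add: Pop_Qop Qop_Pop diag_add_diag Hop_eq_diag add_divide_distrib[symmetric])

lemma Eop_Fop:
  assumes "u \<noteq> 0"
  shows "Eop u (Fop u lam v) = - diag ((hvar - const_k lam - 2) * (hvar + const_k lam) / 4)
                                       ((hvar + const_k lam - 1) * (hvar - const_k lam - 1) / 4) v"
proof -
  have "Eop u (Fop u lam v) = - Pop u (Pop u (Qop u lam (Qop u lam v)))"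
    by (simp add: Eop_def Fop_def Pop_uminus)
  also have "\<dots> = - diag (sigma1 ((hvar - const_k lam - 1) / 2) * ((hvar + const_k lam) / 2))
                         (sigma1 ((hvar + const_k lam) / 2) * ((hvar - const_k lam - 1) / 2)) v"
    by (simp only: Pop_Qop[OF assms] Pop_diag diag_diag)
  also have "\<dots> = - diag ((hvar - const_k lam - 2) * (hvar + const_k lam) / 4)
                         ((hvar + const_k lam - 1) * (hvar - const_k lam - 1) / 4) v"
    by (simp add: sigma1_def field_simps)
  finally show ?thesis .
qed

lemma Fop_Eop:
  assumes "u \<noteq> 0"
  shows "Fop u lam (Eop u v) = - diag ((hvar + const_k lam + 2) * (hvar - const_k lam) / 4)
                                       ((hvar - const_k lam + 1) * (hvar + const_k lam + 1) / 4) v"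
proof -
  have "Fop u lam (Eop u v) = - Qop u lam (Qop u lam (Pop u (Pop u v)))"
    by (simp add: Eop_def Fop_def)
  also have "\<dots> = - diag (sigma1_inv ((hvar + const_k lam + 1) / 2) * ((hvar - const_k lam) / 2))
                         (sigma1_inv ((hvar - const_k lam) / 2) * ((hvar + const_k lam + 1) / 2)) v"
    by (simp only: Qop_Pop[OF assms] Qop_diag diag_diag)
  also have "\<dots> = - diag ((hvar + const_k lam + 2) * (hvar - const_k lam) / 4)
                         ((hvar - const_k lam + 1) * (hvar + const_k lam + 1) / 4) v"
    by (simp add: sigma1_inv_def field_simps)
  finally show ?thesis .
qed

lemma Eop_Fop_commutator:
  assumes "u \<noteq> 0"
  shows "Eop u (Fop u lam v) - Fop u lam (Eop u v) = Hop v"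
  using assms by (simp add: Eop_Fop Fop_Eop Hop_def diag_def field_simps)

lemma SigmaOp_eq_diag:
  assumes "u \<noteq> 0"
  shows "SigmaOp u lam v = diag (const_k lam + 1/2) (- (const_k lam + 1/2)) v"
  using assms by (simp add: SigmaOp_def Pop_Qop Qop_Pop scal_def diag_def field_simps)

lemma SigmaOp_SigmaOp:
  assumes "u \<noteq> 0"
  shows "SigmaOp u lam (SigmaOp u lam v) = scal (const_k ((lam + 1/2)^2)) v"
proof -
  let ?k = "const_k lam + 1/2"
  have "SigmaOp u lam (SigmaOp u lam v) = diag (?k * ?k) (- ?k * - ?k) v"
    by (simp only: SigmaOp_eq_diag[OF assms] diag_diag)
  then show ?thesis by (simp add: scal_eq_diag power2_eq_square algebra_simps)
qed

lemma Cas1_eq_diag: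
  assumes "u \<noteq> 0"
  shows "Cas1 u lam v = diag ((const_k lam + 1)^2) (const_k lam ^ 2) v"
  using assms
  by (cases v) (simp add: Cas1_def Fop_Eop Hop_def scal_def diag_def field_simps power2_eq_square)

lemma Cas2_eq_diag:
  assumes "u \<noteq> 0"
  shows "Cas2 u lam v = diag ((const_k lam + 1)^2) (const_k lam ^ 2) v"
  using assms
  by (cases v) (simp add: Cas2_def Eop_Fop Hop_def scal_def diag_def field_simps power2_eq_square)

theorem lemma21:
  fixes u :: kfield and lam :: complex
  assumes "u \<noteq> 0"
  shows
    \<comment> \<open>(a) C-linearity of the generators\<close>
    "(\<forall>v w. Hop (v + w) = Hop v + Hop w \<and> Pop u (v + w) = Pop u v + Pop u w
              \<and> Qop u lam (v + w) = Qop u lam v + Qop u lam w)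
     \<and> (\<forall>c v. Hop (const_k c * fst v, const_k c * snd v) = (const_k c * fst (Hop v), const_k c * snd (Hop v))
              \<and> Pop u (const_k c * fst v, const_k c * snd v) = (const_k c * fst (Pop u v), const_k c * snd (Pop u v))
              \<and> Qop u lam (const_k c * fst v, const_k c * snd v)
                  = (const_k c * fst (Qop u lam v), const_k c * snd (Qop u lam v)))
     \<comment> \<open>(a) Z_2-grading: h even, p and q odd\<close>
     \<and> (\<forall>a. snd (Hop (a, 0)) = 0 \<and> fst (Hop (0, a)) = 0
            \<and> fst (Pop u (a, 0)) = 0 \<and> snd (Pop u (0, a)) = 0
            \<and> fst (Qop u lam (a, 0)) = 0 \<and> snd (Qop u lam (0, a)) = 0)
     \<comment> \<open>(a) defining relations of U(osp(1|2))\<close>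
     \<and> (\<forall>v. Hop (Eop u v) - Eop u (Hop v) = scal 2 (Eop u v)
          \<and> Hop (Fop u lam v) - Fop u lam (Hop v) = scal (- 2) (Fop u lam v)
          \<and> Eop u (Fop u lam v) - Fop u lam (Eop u v) = Hop v
          \<and> Hop (Pop u v) - Pop u (Hop v) = Pop u v
          \<and> Hop (Qop u lam v) - Qop u lam (Hop v) = - Qop u lam v
          \<and> Pop u (Pop u v) = Eop u v
          \<and> Qop u lam (Qop u lam v) = - Fop u lam v
          \<and> Pop u (Qop u lam v) + Qop u lam (Pop u v) = Hop v)
     \<comment> \<open>(b) Sigma acts as (lam+1/2) diag(1,-1), Sigma^2 as (lam+1/2)^2\<close>
     \<and> (\<forall>a b. SigmaOp u lam (a, b) = (const_k (lam + 1/2) * a, - const_k (lam + 1/2) * b))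
     \<and> (\<forall>v. SigmaOp u lam (SigmaOp u lam v) = (const_k ((lam + 1/2)^2) * fst v, const_k ((lam + 1/2)^2) * snd v))
     \<comment> \<open>(c) sl_2 Casimir\<close>
     \<and> (\<forall>v. Cas1 u lam v = Cas2 u lam v)
     \<and> (\<forall>a. Cas1 u lam (a, 0) = (const_k ((lam + 1)^2) * a, 0))
     \<and> (\<forall>b. Cas1 u lam (0, b) = (0, const_k (lam^2) * b))"
proof -
  have SigmaOp_Pair: "SigmaOp u lam (a, b) = (const_k (lam + 1/2) * a, - const_k (lam + 1/2) * b)"
    for a b using SigmaOp_eq_diag[OF assms] by (simp add: diag_def)
  show ?thesis
    using assms
    by (simp add: Hop_add Pop_add Qop_add Hop_scal_const_k Pop_scal_const_k Qop_scal_const_k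
        Hop_Pop_commutator Hop_Qop_commutator Hop_Eop_commutator Hop_Fop_commutator
        Pop_Pop Qop_Qop Pop_Qop_anticommutator Eop_Fop_commutator
        SigmaOp_Pair SigmaOp_SigmaOp Cas1_eq_diag Cas2_eq_diag diag_def flip: scal_def)
       (simp add: Hop_def Pop_def Qop_def)
qed

end
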